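(* Let $k\ge3$, let $m_1,\dots,m_{k-1}\ge0$ be integers, and fix $w\in\mathcal P(\mathcal M_{k-2})$ (letters $e_1,\dots,e_{k-2}$ with counts $m_1,\dots,m_{k-2}$) and $\Pi\in\mathcal P([m_{k-2}\times m_{k-1}])$. Consider the words $W\in\mathcal P(\mathcal M_{k-1})$ such that: (i) deleting all letters $e_{k-1}$ from $W$ gives $w$, and (ii) deleting all letters $e_1,\dots,e_{k-3}$ from $W$ and renaming $e_{k-2}\mapsto a$, $e_{k-1}\mapsto b$ gives $\Pi$. The number of such $W$ is $$\prod_{r=0}^{m_{k-2}}\binom{\pi^\star(\Pi)(r)+\sum_{l=1}^{k-3}\pi^\star_{k-2,l}(w)(r)}{\pi^\star(\Pi)(r)}.$$ All such $W$ yield the same value $S(w)\cdot\pi^\star(\Pi)=\sum_{r=0}^{m_{k-2}}S_r(w)\pi^\star(\Pi)(r)$ of the count of position tuples $p_1<\dots<p_{k-1}$ with letter $e_j$ at $p_j$. Summing these counts over all $(w,\Pi)$ gives $\binom{m_1+\cdots+m_{k-1}}{m_1,\ldots,m_{k-1}}$.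
   Context: $\mathcal P(\mathcal M_d)$ is the set of words of length $m_1+\dots+m_d$ in letters $e_1,\dots,e_d$ containing exactly $m_i$ copies of $e_i$. For a word $w$ and $i\ne j$, $\pi_{i,j}(w)(s)$ ($s=1,\dots,m_j$) is the number of occurrences of $e_i$ preceding the $s$-th occurrence of $e_j$, and $\pi^\star_{i,j}(w)(r)=\#\{s:\pi_{i,j}(w)(s)=r\}$. $S_t(w)$, for $w\in\mathcal P(\mathcal M_d)$ and $0\le t\le m_d$, is the number of position tuples $p_1<\dots<p_d$ in $w$ with letter $e_i$ at $p_i$ for each $i$, and $p_d$ at or before the $t$-th occurrence of $e_d$. $\mathcal P([m_{k-2}\times m_{k-1}])$ is the set of words with $m_{k-2}$ letters $a$ and $m_{k-1}$ letters $b$. For such $\Pi$, $\pi(\Pi)(s)$ is the number of $a$'s before the $s$-th $b$, and $\pi^\star(\Pi)(r)=\#\{s:\pi(\Pi)(s)=r\}$ for $r=0,\dots,m_{k-2}$. An empty sum over $l$ is $0$. *)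

theory Defs
  imports Main
begin

text \<open>Letters e_1,...,e_d are encoded as the natural numbers 1,...,d.\<close>

definition words :: "(nat \<Rightarrow> nat) \<Rightarrow> nat \<Rightarrow> nat list set" where
  "words m d = {w. set w \<subseteq> {1..d} \<and> (\<forall>i\<in>{1..d}. count_list w i = m i)}"

datatype ab = A | B

definition abwords :: "nat \<Rightarrow> nat \<Rightarrow> ab list set" where
  "abwords p q = {P. count_list P A = p \<and> count_list P B = q}"

text \<open>Position (0-based) of the s-th occurrence (s >= 1) of letter j in w.\<close>
definition occ_pos :: "'a \<Rightarrow> 'a list \<Rightarrow> nat \<Rightarrow> nat" where
  "occ_pos j w s = (THE p. p < length w \<and> w ! p = j \<and> count_list (take p w) j = s - 1)"

definition prec :: "'a \<Rightarrow> 'a \<Rightarrow> 'a list \<Rightarrow> nat \<Rightarrow> nat" where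
  "prec i j w s = count_list (take (occ_pos j w s) w) i"

definition pistar :: "'a \<Rightarrow> 'a \<Rightarrow> 'a list \<Rightarrow> nat \<Rightarrow> nat" where
  "pistar i j w r = card {s \<in> {1..count_list w j}. prec i j w s = r}"

definition tuples :: "nat \<Rightarrow> nat list \<Rightarrow> nat" where
  "tuples d w = card {p. length p = d \<and> sorted_wrt (<) p \<and>
      (\<forall>q<d. p ! q < length w \<and> w ! (p ! q) = Suc q)}"

text \<open>S_t(w): as above, with p_d at or before the t-th occurrence of e_d.\<close>
definition Scount :: "nat \<Rightarrow> nat list \<Rightarrow> nat \<Rightarrow> nat" where
  "Scount d w t = card {p. length p = d \<and> sorted_wrt (<) p \<and>
      (\<forall>q<d. p ! q < length w \<and> w ! (p ! q) = Suc q) \<and>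
      count_list (take (Suc (p ! (d - 1))) w) d \<le> t}"

definition multinomial :: "(nat \<Rightarrow> nat) \<Rightarrow> nat \<Rightarrow> nat" where
  "multinomial m d = fact (\<Sum>i=1..d. m i) div (\<Prod>i=1..d. fact (m i))"

end

theory Submission
  imports Defs "HOL-Combinatorics.Multiset_Permutations"
begin

text \<open>
  Write d = k - 2. A word W over e_1, ..., e_{d+1} in the fibre over (w, \<Pi>) is obtained from w by
  inserting the letters e_{d+1}, and \<Pi> prescribes how many of them, \<pi>*(\<Pi>)(r), fall into the r-th
  gap of w, i.e. after exactly r letters e_d. Inside that gap they may be shuffled freely with the
  \<Sum>_l \<pi>*_{d,l}(w)(r) other letters of w found there, which gives one binomial factor per gap.
  A tuple p_1 < ... < p_{d+1} of W ends in some e_{d+1} lying in gap r, and its first d entries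
  form a tuple of w ending at or before the r-th e_d; there are S_r(w) of these. Finally the
  fibres partition all words, whose number is the multinomial coefficient.
\<close>

lemma count_list_filter: "count_list (filter Q xs) x = (if Q x then count_list xs x else 0)"
  by (induction xs) auto

lemma count_list_ab_projection:
  assumes "b \<noteq> c"
  shows "count_list (map (\<lambda>x. if x = c then A else B) (filter (\<lambda>x. x = c \<or> x = b) W)) A = count_list W c"
    and "count_list (map (\<lambda>x. if x = c then A else B) (filter (\<lambda>x. x = c \<or> x = b) W)) B = count_list W b"
  using assms by (induction W) auto

(* The letters satisfying Q in the r-th gap of xs, i.e. preceded by exactly r copies of c. *)
fun gap_count :: "'a \<Rightarrow> ('a \<Rightarrow> bool) \<Rightarrow> 'a list \<Rightarrow> nat \<Rightarrow> nat" where
  "gap_count c Q [] r = 0"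
| "gap_count c Q (x # xs) r = (if Q x \<and> r = 0 then 1 else 0) +
     (if x = c then (case r of 0 \<Rightarrow> 0 | Suc r' \<Rightarrow> gap_count c Q xs r') else gap_count c Q xs r)"

lemma gap_count_snoc:
  "gap_count c Q (xs @ [x]) r = gap_count c Q xs r + (if Q x \<and> r = count_list xs c then 1 else 0)"
  by (induction xs arbitrary: r) (auto split: nat.split)

lemma gap_count_eq_0: "count_list xs c < r \<Longrightarrow> gap_count c Q xs r = 0"
  by (induction xs arbitrary: r) (auto split: nat.split)

lemma gap_count_cong: "(\<And>x. x \<in> set xs \<Longrightarrow> Q x = Q' x) \<Longrightarrow> gap_count c Q xs r = gap_count c Q' xs r"
  by (induction xs arbitrary: r) (auto split: nat.split)

lemma sum_gap_count:
  "finite L \<Longrightarrow> (\<Sum>l\<in>L. gap_count c (\<lambda>x. x = l) xs r) = gap_count c (\<lambda>x. x \<in> L) xs r"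
  by (induction xs arbitrary: r) (auto split: nat.split simp: sum.distrib)

lemma card_gap_positions:
  "card {p. p < length w \<and> w ! p = j \<and> count_list (take p w) i = r} = gap_count i (\<lambda>x. x = j) w r"
proof (induction w arbitrary: r)
  case (Cons x xs)
  have "{p. p < length (x # xs) \<and> (x # xs) ! p = j \<and> count_list (take p (x # xs)) i = r} =
      (if x = j \<and> r = 0 then {0} else {}) \<union>
      Suc ` {q. q < length xs \<and> xs ! q = j \<and> (if x = i then 1 else 0) + count_list (take q xs) i = r}"
    by (auto simp: less_Suc_eq_0_disj)
  then show ?case
    using Cons.IH by (cases "x = i"; cases r) (simp_all add: card_image)
qed simp

lemma count_take_le: "count_list (take n w) x \<le> count_list w x"
  by (metis append_take_drop_id count_list_append le_add1)

lemma count_take_mono: "p \<le> p' \<Longrightarrow> count_list (take p w) j \<le> count_list (take p' w) j"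
  by (metis count_take_le min.absorb1 take_take)

lemma count_take_Suc:
  "p < length w \<Longrightarrow> count_list (take (Suc p) w) j = count_list (take p w) j + (if w ! p = j then 1 else 0)"
  by (simp add: take_Suc_conv_app_nth)

lemma occurrence_inj:
  assumes "p < length w" "p' < length w" "w ! p = j" "w ! p' = j"
    and "count_list (take p w) j = count_list (take p' w) j"
  shows "p = p'"
proof (rule ccontr)
  have lt: "count_list (take p w) j < count_list (take p' w) j"
    if "p < p'" "p < length w" "w ! p = j" for p p'
    using that count_take_Suc[of p w j] count_take_mono[of "Suc p" p' w j] by simp
  assume "p \<noteq> p'"
  then show False using assms lt[of p p'] lt[of p' p] by linarith
qed

lemma occurrence_exists:
  "1 \<le> s \<Longrightarrow> s \<le> count_list w j \<Longrightarrow> \<exists>p<length w. w ! p = j \<and> count_list (take p w) j = s - 1"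
proof (induction w arbitrary: s)
  case (Cons x xs)
  show ?case
  proof (cases "x = j \<and> s = 1")
    case True
    then show ?thesis by (intro exI[of _ 0]) auto
  next
    case False
    have "\<exists>p<length xs. xs ! p = j \<and> count_list (take p xs) j = (if x = j then s - 1 else s) - 1"
      using Cons.IH[of "if x = j then s - 1 else s"] Cons.prems False by auto
    then obtain p where "p < length xs" "xs ! p = j"
        "count_list (take p xs) j = (if x = j then s - 1 else s) - 1"
      by blast
    then show ?thesis using False Cons.prems by (intro exI[of _ "Suc p"]) auto
  qed
qed simp

lemma pistar_eq_gap_count: "pistar i j w r = gap_count i (\<lambda>x. x = j) w r"
proof -
  define Ps where "Ps = {p. p < length w \<and> w ! p = j \<and> count_list (take p w) i = r}"
  define rank where "rank p = Suc (count_list (take p w) j)" for p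
  have occ: "occ_pos j w (rank p) = p" if "p < length w" "w ! p = j" for p
    unfolding occ_pos_def rank_def using that occurrence_inj[of _ w p j] by (intro the_equality) auto
  have "{s \<in> {1..count_list w j}. prec i j w s = r} = rank ` Ps"
  proof (intro set_eqI iffI)
    fix s assume s: "s \<in> {s \<in> {1..count_list w j}. prec i j w s = r}"
    then obtain p where p: "p < length w" "w ! p = j" "count_list (take p w) j = s - 1"
      using occurrence_exists[of s w j] by auto
    then have "rank p = s" using s by (auto simp: rank_def)
    then show "s \<in> rank ` Ps" using p s occ[OF p(1,2)] by (auto simp: Ps_def prec_def)
  next
    fix s assume "s \<in> rank ` Ps"
    then obtain p where p: "p \<in> Ps" "s = rank p" by auto
    then have "rank p \<le> count_list w j"
      using count_take_Suc[of p w j] count_take_le[of "Suc p" w j] by (auto simp: Ps_def rank_def)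
    then show "s \<in> {s \<in> {1..count_list w j}. prec i j w s = r}"
      using p occ[of p] by (auto simp: Ps_def prec_def rank_def)
  qed
  moreover have "inj_on rank Ps"
    unfolding inj_on_def Ps_def rank_def using occurrence_inj[of _ w _ j] by auto
  ultimately show ?thesis
    unfolding pistar_def by (simp add: card_image card_gap_positions[symmetric] Ps_def)
qed

(* The fibre of the theorem, for an arbitrary inserted letter b and gap letter c. *)
definition merges :: "'a \<Rightarrow> 'a \<Rightarrow> 'a list \<Rightarrow> ab list \<Rightarrow> 'a list set" where
  "merges b c w P = {W. filter (\<lambda>x. x \<noteq> b) W = w \<and>
     map (\<lambda>x. if x = c then A else B) (filter (\<lambda>x. x = c \<or> x = b) W) = P}"

lemma list_set_eqI:
  "([] \<in> S \<longleftrightarrow> [] \<in> T) \<Longrightarrow> (\<And>y W. y # W \<in> S \<longleftrightarrow> y # W \<in> T) \<Longrightarrow> S = T"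
  by (metis neq_Nil_conv set_eqI)

lemma Cons_mem_merges:
  assumes "b \<noteq> c"
  shows "y # W \<in> merges b c w P \<longleftrightarrow>
    (y = b \<and> (\<exists>P'. P = B # P' \<and> W \<in> merges b c w P')) \<or>
    (y = c \<and> (\<exists>w' P'. w = c # w' \<and> P = A # P' \<and> W \<in> merges b c w' P')) \<or>
    (y \<noteq> b \<and> y \<noteq> c \<and> (\<exists>w'. w = y # w' \<and> W \<in> merges b c w' P))"
  using assms by (auto simp: merges_def)

lemma merges_Nil_Nil: "b \<noteq> c \<Longrightarrow> merges b c [] [] = {[]}"
  by (rule list_set_eqI) (auto simp: Cons_mem_merges merges_def)

lemma merges_B_forced:
  "b \<noteq> c \<Longrightarrow> w = [] \<or> hd w = c \<Longrightarrow> merges b c w (B # P) = Cons b ` merges b c w P"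
  by (rule list_set_eqI) (auto simp: Cons_mem_merges merges_def)

lemma merges_A_Cons: "b \<noteq> c \<Longrightarrow> merges b c (c # w) (A # P) = Cons c ` merges b c w P"
  by (rule list_set_eqI) (auto simp: Cons_mem_merges merges_def)

lemma merges_other_forced:
  "b \<noteq> c \<Longrightarrow> x \<noteq> b \<Longrightarrow> x \<noteq> c \<Longrightarrow> P = [] \<or> hd P = A \<Longrightarrow>
    merges b c (x # w) P = Cons x ` merges b c w P"
  by (rule list_set_eqI) (auto simp: Cons_mem_merges merges_def)

lemma merges_B_choice:
  "b \<noteq> c \<Longrightarrow> x \<noteq> b \<Longrightarrow> x \<noteq> c \<Longrightarrow>
    merges b c (x # w) (B # P) = Cons b ` merges b c (x # w) P \<union> Cons x ` merges b c w (B # P)"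
  by (rule list_set_eqI) (auto simp: Cons_mem_merges merges_def)

lemma finite_merges: "finite (merges b c w P)"
proof -
  have "length W \<le> length w + length P" if "W \<in> merges b c w P" for W
  proof -
    have "length (filter (\<lambda>x. x = b) W) \<le> length (filter (\<lambda>x. x = c \<or> x = b) W)"
      by (induction W) auto
    then show ?thesis
      using that sum_length_filter_compl[of "\<lambda>x. x = b" W] by (auto simp: merges_def)
  qed
  then have "merges b c w P \<subseteq> {W. set W \<subseteq> insert b (set w) \<and> length W \<le> length w + length P}"
    by (auto simp: merges_def)
  then show ?thesis
    using finite_lists_length_le[of "insert b (set w)"] finite_subset by blast
qed

definition merge_count :: "'a \<Rightarrow> 'a list \<Rightarrow> ab list \<Rightarrow> nat" where
  "merge_count c w P = (\<Prod>r\<le>count_list P A.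
     (gap_count A (\<lambda>x. x = B) P r + gap_count c (\<lambda>x. x \<noteq> c) w r) choose gap_count A (\<lambda>x. x = B) P r)"

lemma merge_count_split:
  "merge_count c w P =
    ((gap_count A (\<lambda>x. x = B) P 0 + gap_count c (\<lambda>x. x \<noteq> c) w 0) choose gap_count A (\<lambda>x. x = B) P 0) *
    (\<Prod>i<count_list P A. (gap_count A (\<lambda>x. x = B) P (Suc i) + gap_count c (\<lambda>x. x \<noteq> c) w (Suc i))
                            choose gap_count A (\<lambda>x. x = B) P (Suc i))"
  unfolding merge_count_def by (rule prod.atMost_shift)

lemma merge_count_Nil_Nil: "merge_count c [] [] = 1"
  by (simp add: merge_count_def)

lemma merge_count_B_forced:
  "gap_count c (\<lambda>x. x \<noteq> c) w 0 = 0 \<Longrightarrow> merge_count c w (B # P) = merge_count c w P"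
  by (simp add: merge_count_split)

lemma merge_count_A_Cons: "merge_count c (c # w) (A # P) = merge_count c w P"
  by (simp add: merge_count_def prod.atMost_Suc_shift del: prod.atMost_Suc)

lemma merge_count_other_forced:
  "x \<noteq> c \<Longrightarrow> P = [] \<or> hd P = A \<Longrightarrow> merge_count c (x # w) P = merge_count c w P"
  by (cases P) (auto simp: merge_count_split)

lemma merge_count_B_choice:
  assumes "x \<noteq> c"
  shows "merge_count c (x # w) (B # P) = merge_count c (x # w) P + merge_count c w (B # P)"
proof -
  define u where "u = gap_count A (\<lambda>x. x = B) P 0"
  define g where "g = gap_count c (\<lambda>x. x \<noteq> c) w 0"
  define R where "R = (\<Prod>i<count_list P A.
    (gap_count A (\<lambda>x. x = B) P (Suc i) + gap_count c (\<lambda>x. x \<noteq> c) w (Suc i))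
      choose gap_count A (\<lambda>x. x = B) P (Suc i))"
  have "merge_count c (x # w) (B # P) = (Suc u + Suc g choose Suc u) * R"
    "merge_count c (x # w) P = (u + Suc g choose u) * R"
    "merge_count c w (B # P) = (Suc u + g choose Suc u) * R"
    using assms by (simp_all add: merge_count_split u_def g_def R_def)
  then show ?thesis by (simp add: algebra_simps) \<comment> \<open>Pascal's rule in gap 0\<close>
qed

lemma merge_step_cases:
  fixes w :: "'a list" and P :: "ab list"
  assumes "count_list w c = count_list P A"
  obtains "w = []" "P = []"
    | P' where "P = B # P'" "w = [] \<or> hd w = c"
    | w' P' where "w = c # w'" "P = A # P'"
    | x w' P' where "w = x # w'" "x \<noteq> c" "P = B # P'"
    | x w' where "w = x # w'" "x \<noteq> c" "P = [] \<or> hd P = A"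
proof (cases P)
  case (Cons p P')
  then show thesis using that assms by (cases p; cases w) auto
qed (use that assms in \<open>cases w; auto split: if_splits\<close>)

lemma card_merges:
  assumes "b \<noteq> c" "b \<notin> set w" "count_list w c = count_list P A"
  shows "card (merges b c w P) = merge_count c w P"
  using assms(2,3)
proof (induction "length w + length P" arbitrary: w P rule: less_induct)
  case less
  have gap0: "gap_count c (\<lambda>x. x \<noteq> c) w 0 = 0" if "w = [] \<or> hd w = c"
    using that by (cases w) auto
  show ?case
  proof (cases rule: merge_step_cases[OF less.prems(2)])
    case 1
    then show ?thesis using assms(1) by (simp add: merges_Nil_Nil merge_count_Nil_Nil)
  next
    case (2 P')
    then show ?thesis
      using less assms(1) gap0
      by (simp add: merges_B_forced card_image merge_count_B_forced)
  next
    case (3 w' P')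
    then show ?thesis
      using less assms(1) by (simp add: merges_A_Cons card_image merge_count_A_Cons)
  next
    case (4 x w' P')
    have IH: "card (merges b c w P') = merge_count c w P'" "card (merges b c w' P) = merge_count c w' P"
      using less 4 by auto
    have "x \<noteq> b" using less.prems 4 by auto
    then have "card (merges b c w P) = card (merges b c w P') + card (merges b c w' P)"
      using 4 assms(1) by (simp add: merges_B_choice, subst card_Un_disjoint) (auto simp: finite_merges card_image)
    then show ?thesis using IH 4 by (simp add: merge_count_B_choice)
  next
    case (5 x w')
    then have "x \<noteq> b" using less.prems by auto
    then show ?thesis
      using 5 less assms(1) by (simp add: merges_other_forced card_image merge_count_other_forced)
  qed
qed

definition position_tuples :: "nat \<Rightarrow> nat list \<Rightarrow> nat list set" where
  "position_tuples d w = {p. length p = d \<and> sorted_wrt (<) p \<and>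
     (\<forall>q<d. p ! q < length w \<and> w ! (p ! q) = Suc q)}"

lemma tuples_eq_card_position_tuples: "tuples d w = card (position_tuples d w)"
  unfolding tuples_def position_tuples_def ..

lemma finite_position_tuples: "finite (position_tuples d w)"
proof -
  have "position_tuples d w \<subseteq> {p. set p \<subseteq> {..<length w} \<and> length p = d}"
    unfolding position_tuples_def by (auto simp: in_set_conv_nth)
  then show ?thesis using finite_lists_length_eq[of "{..<length w}" d] finite_subset by blast
qed

lemma tuples_0: "tuples 0 w = 1"
proof -
  have "position_tuples 0 w = {[]}" unfolding position_tuples_def by auto
  then show ?thesis by (simp add: tuples_eq_card_position_tuples)
qed

lemma position_tuples_snoc_last:
  assumes p: "p \<in> position_tuples (Suc j) (W @ [y])" and last: "p ! j = length W"
  shows "y = Suc j" and "p = butlast p @ [length W]" and "butlast p \<in> position_tuples j W"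
proof -
  have len: "length p = Suc j" and sorted: "sorted_wrt (<) p"
    and letters: "\<And>q. q < Suc j \<Longrightarrow> p ! q < Suc (length W) \<and> (W @ [y]) ! (p ! q) = Suc q"
    using p unfolding position_tuples_def by auto
  show "y = Suc j" using letters[of j] last by simp
  show p_eq: "p = butlast p @ [length W]"
    using len last by (metis append_butlast_last_id diff_Suc_1 last_conv_nth list.size(3) nat.distinct(1))
  have "\<forall>q<j. butlast p ! q < length W \<and> W ! (butlast p ! q) = Suc q"
  proof (intro allI impI)
    fix q assume q: "q < j"
    have "p ! q < p ! j" using sorted len q sorted_wrt_nth_less by fastforce
    then show "butlast p ! q < length W \<and> W ! (butlast p ! q) = Suc q"
      using letters[of q] q last len by (simp add: nth_butlast nth_append)
  qed
  moreover have "sorted_wrt (<) (butlast p)" using sorted p_eq by (metis sorted_wrt_append)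
  ultimately show "butlast p \<in> position_tuples j W" using len unfolding position_tuples_def by simp
qed

lemma position_tuples_snoc:
  "position_tuples (Suc j) (W @ [y]) = position_tuples (Suc j) W \<union>
    (if y = Suc j then (\<lambda>p. p @ [length W]) ` position_tuples j W else {})"
  (is "?lhs = ?rhs")
proof (intro set_eqI iffI)
  fix p assume p: "p \<in> ?lhs"
  then have len: "length p = Suc j" and sorted: "sorted_wrt (<) p"
    and letters: "\<And>q. q < Suc j \<Longrightarrow> p ! q < Suc (length W) \<and> (W @ [y]) ! (p ! q) = Suc q"
    unfolding position_tuples_def by auto
  show "p \<in> ?rhs"
  proof (cases "p ! j < length W")
    case True
    have "p ! q \<le> p ! j" if "q < Suc j" for q
      using sorted len that by (metis less_Suc_eq nat_less_le order_refl sorted_wrt_nth_less)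
    then have "\<forall>q<Suc j. p ! q < length W \<and> W ! (p ! q) = Suc q"
      using letters True by (metis le_less_trans nth_append)
    then show ?thesis using len sorted unfolding position_tuples_def by auto
  next
    case False
    then have "p ! j = length W" using letters[of j] by auto
    then show ?thesis using position_tuples_snoc_last[OF p] by auto
  qed
next
  fix p assume "p \<in> ?rhs"
  then consider "p \<in> position_tuples (Suc j) W"
    | p' where "y = Suc j" "p' \<in> position_tuples j W" "p = p' @ [length W]"
    by (auto split: if_splits)
  then show "p \<in> ?lhs"
  proof cases
    case 1
    then show ?thesis unfolding position_tuples_def by (auto simp: nth_append)
  next
    case 2
    then have "\<forall>x\<in>set p'. x < length W" unfolding position_tuples_def by (auto simp: in_set_conv_nth)
    then show ?thesis using 2 unfolding position_tuples_def
      by (auto simp: nth_append sorted_wrt_append less_Suc_eq)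
  qed
qed

lemma tuples_snoc:
  "tuples (Suc j) (W @ [y]) = tuples (Suc j) W + (if y = Suc j then tuples j W else 0)"
proof -
  have "position_tuples (Suc j) W \<inter> (\<lambda>p. p @ [length W]) ` position_tuples j W = {}"
    unfolding position_tuples_def by auto
  moreover have "inj_on (\<lambda>p. p @ [length W]) (position_tuples j W)" by (auto simp: inj_on_def)
  ultimately show ?thesis
    unfolding tuples_eq_card_position_tuples position_tuples_snoc
    by (simp add: card_Un_disjoint card_image finite_position_tuples)
qed

lemma tuples_filter_neq: "j < b \<Longrightarrow> tuples j (filter (\<lambda>x. x \<noteq> b) W) = tuples j W"
proof (induction W arbitrary: j rule: rev_induct)
  case (snoc y W)
  then show ?case by (cases j) (auto simp: tuples_0 tuples_snoc)
qed simp

lemma Scount_count_list: "Scount d w (count_list w d) = tuples d w"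
  unfolding Scount_def tuples_def using count_take_le by metis

lemma Scount_snoc:
  assumes "1 \<le> d" and "t \<le> count_list w d"
  shows "Scount d (w @ [y]) t = Scount d w t"
proof -
  have "(length p = d \<and> sorted_wrt (<) p \<and>
      (\<forall>q<d. p ! q < length (w @ [y]) \<and> (w @ [y]) ! (p ! q) = Suc q) \<and>
      count_list (take (Suc (p ! (d - 1))) (w @ [y])) d \<le> t) \<longleftrightarrow>
    (length p = d \<and> sorted_wrt (<) p \<and>
      (\<forall>q<d. p ! q < length w \<and> w ! (p ! q) = Suc q) \<and>
      count_list (take (Suc (p ! (d - 1))) w) d \<le> t)" (is "?old \<longleftrightarrow> ?new") for p
  proof
    assume ?old
    then have len: "length p = d" and sorted: "sorted_wrt (<) p"
      and letters: "\<And>q. q < d \<Longrightarrow> p ! q < Suc (length w) \<and> (w @ [y]) ! (p ! q) = Suc q"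
      and cnt: "count_list (take (Suc (p ! (d - 1))) (w @ [y])) d \<le> t" by auto
    have last_max: "p ! q \<le> p ! (d - 1)" if "q < d" for q
    proof (cases "q = d - 1")
      case False
      with that have "q < d - 1" by linarith
      then show ?thesis using sorted len assms(1) sorted_wrt_nth_less[of "(<)" p q "d - 1"] by simp
    qed simp
    have lt: "p ! (d - 1) < length w"
    proof (rule ccontr)
      assume "\<not> ?thesis"
      then have pd: "p ! (d - 1) = length w" using letters[of "d - 1"] assms(1) by auto
      then have "y = d" using letters[of "d - 1"] assms(1) by simp
      then show False using cnt pd assms(2) by simp
    qed
    then have "\<forall>q<d. p ! q < length w \<and> w ! (p ! q) = Suc q"
      using letters last_max by (metis le_less_trans nth_append)
    then show ?new using len sorted cnt lt by simp
  next
    assume ?new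
    moreover have "p ! (d - 1) < length w" using \<open>?new\<close> assms(1) by auto
    ultimately show ?old by (auto simp: nth_append)
  qed
  then show ?thesis unfolding Scount_def by simp
qed

lemma tuples_Suc_eq_sum_Scount:
  assumes "1 \<le> d" "count_list W d \<le> N"
  shows "tuples (Suc d) W = (\<Sum>r\<le>N. Scount d (filter (\<lambda>x. x \<noteq> Suc d) W) r *
     gap_count A (\<lambda>x. x = B) (map (\<lambda>x. if x = d then A else B) (filter (\<lambda>x. x = d \<or> x = Suc d) W)) r)"
  using assms(2)
proof (induction W rule: rev_induct)
  case Nil
  have "position_tuples (Suc d) [] = {}" unfolding position_tuples_def by (auto dest: spec[of _ 0])
  then show ?case by (simp add: tuples_eq_card_position_tuples)
next
  case (snoc y W)
  define w where "w = filter (\<lambda>x. x \<noteq> Suc d) W"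
  define P where "P = map (\<lambda>x. if x = d then A else B) (filter (\<lambda>x. x = d \<or> x = Suc d) W)"
  have cP: "count_list P A = count_list W d" unfolding P_def by (simp add: count_list_ab_projection)
  have cw: "count_list w d = count_list W d" unfolding w_def by (simp add: count_list_filter)
  have IH: "tuples (Suc d) W = (\<Sum>r\<le>N. Scount d w r * gap_count A (\<lambda>x. x = B) P r)"
    using snoc by (simp add: w_def P_def)
  show ?case
  proof (cases "y = Suc d")
    case True
    have "tuples d W = Scount d w (count_list P A)"
      using cP cw Scount_count_list[of d w] tuples_filter_neq[of d "Suc d" W] by (simp add: w_def)
    also have "\<dots> = (\<Sum>r\<le>N. Scount d w r * (if r = count_list P A then 1 else 0))"
      using snoc.prems cP True by (simp add: if_distrib cong: if_cong)
    finally show ?thesis using True IH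
      by (simp add: tuples_snoc w_def[symmetric] P_def[symmetric] gap_count_snoc sum.distrib algebra_simps)
  next
    case False
    have "Scount d (w @ [y]) r * gap_count A (\<lambda>x. x = B) P r = Scount d w r * gap_count A (\<lambda>x. x = B) P r" for r
    proof (cases "r \<le> count_list w d")
      case True
      then show ?thesis using Scount_snoc[OF assms(1) True] by simp
    next
      case False
      then show ?thesis using gap_count_eq_0[of P A r] cP cw by simp
    qed
    then have "(\<Sum>r\<le>N. Scount d (w @ [y]) r * gap_count A (\<lambda>x. x = B) P r) =
        (\<Sum>r\<le>N. Scount d w r * gap_count A (\<lambda>x. x = B) P r)"
      by (intro sum.cong) auto
    then show ?thesis using False IH
      by (cases "y = d") (simp_all add: tuples_snoc w_def[symmetric] P_def[symmetric] gap_count_snoc)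
  qed
qed

definition letter_mset :: "(nat \<Rightarrow> nat) \<Rightarrow> nat \<Rightarrow> nat multiset" where
  "letter_mset m d = (\<Sum>i\<in>{1..d}. replicate_mset (m i) i)"

lemma count_letter_mset: "count (letter_mset m d) x = (if x \<in> {1..d} then m x else 0)"
  by (simp add: letter_mset_def count_sum)

lemma words_eq_permutations_of_multiset: "words m d = permutations_of_multiset (letter_mset m d)"
proof (intro set_eqI)
  fix w :: "nat list"
  have "w \<in> words m d \<longleftrightarrow> (\<forall>x. count_list w x = count (letter_mset m d) x)"
    unfolding words_def count_letter_mset by (auto simp: subset_iff count_list_0_iff)
  then show "w \<in> words m d \<longleftrightarrow> w \<in> permutations_of_multiset (letter_mset m d)"
    by (simp add: permutations_of_multiset_def multiset_eq_iff count_mset)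
qed

lemma finite_words: "finite (words m d)"
  by (simp add: words_eq_permutations_of_multiset)

lemma card_words: "card (words m d) = multinomial m d"
proof -
  have "size (letter_mset m d) = (\<Sum>i=1..d. m i)"
    by (simp add: letter_mset_def)
  moreover have "set_mset (letter_mset m d) = {i \<in> {1..d}. m i \<noteq> 0}"
    by (auto simp: count_letter_mset split: if_splits simp flip: count_greater_zero_iff)
  then have "(\<Prod>x\<in>set_mset (letter_mset m d). fact (count (letter_mset m d) x)) = (\<Prod>i=1..d. fact (m i) :: nat)"
    by (simp add: count_letter_mset, intro prod.mono_neutral_left) auto
  ultimately show ?thesis
    by (simp add: words_eq_permutations_of_multiset card_permutations_of_multiset multinomial_def)
qed

lemma finite_abwords: "finite (abwords p q)"
proof -
  have "length P = count_list P A + count_list P B" for P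
  proof (induction P)
    case (Cons a P)
    then show ?case by (cases a) auto
  qed simp
  then have "abwords p q \<subseteq> {P. set P \<subseteq> {A, B} \<and> length P = p + q}"
    unfolding abwords_def using ab.exhaust by auto
  then show ?thesis using finite_lists_length_eq[of "{A, B}" "p + q"] finite_subset by blast
qed

lemma filter_top_letters:
  "set W \<subseteq> {1..Suc d} \<Longrightarrow> filter (\<lambda>x. x \<notin> {1..d - 1}) W = filter (\<lambda>x. x = d \<or> x = Suc d) W"
  by (intro filter_cong) auto

definition word_fibre :: "(nat \<Rightarrow> nat) \<Rightarrow> nat \<Rightarrow> nat list \<Rightarrow> ab list \<Rightarrow> nat list set" where
  "word_fibre m d w P = {W \<in> words m (Suc d). filter (\<lambda>x. x \<noteq> Suc d) W = w \<and>
     map (\<lambda>x. if x = d then A else B) (filter (\<lambda>x. x \<notin> {1..d - 1}) W) = P}"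

lemma word_fibre_eq_merges:
  assumes w: "w \<in> words m d" and P: "P \<in> abwords (m d) (m (Suc d))"
  shows "word_fibre m d w P = merges (Suc d) d w P"
proof (intro set_eqI iffI)
  fix W assume W: "W \<in> word_fibre m d w P"
  then have "set W \<subseteq> {1..Suc d}" by (simp add: word_fibre_def words_def)
  then show "W \<in> merges (Suc d) d w P"
    using W filter_top_letters[of W d] by (simp add: word_fibre_def merges_def)
next
  fix W assume W: "W \<in> merges (Suc d) d w P"
  then have w_eq: "filter (\<lambda>x. x \<noteq> Suc d) W = w"
    and P_eq: "map (\<lambda>x. if x = d then A else B) (filter (\<lambda>x. x = d \<or> x = Suc d) W) = P"
    by (auto simp: merges_def)
  have "set W \<subseteq> insert (Suc d) (set w)" using w_eq by auto
  then have letters: "set W \<subseteq> {1..Suc d}" using w unfolding words_def by fastforce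
  have "count_list W i = m i" if "i \<in> {1..Suc d}" for i
  proof (cases "i = Suc d")
    case True
    then show ?thesis using P P_eq count_list_ab_projection(2)[of "Suc d" d W] by (simp add: abwords_def)
  next
    case False
    then show ?thesis using w w_eq that count_list_filter[of "\<lambda>x. x \<noteq> Suc d" W i]
      by (auto simp: words_def)
  qed
  then show "W \<in> word_fibre m d w P"
    using letters w_eq P_eq filter_top_letters[of W d] by (simp add: word_fibre_def words_def)
qed

lemma sum_pistar_eq_gap_count:
  assumes "w \<in> words m d"
  shows "(\<Sum>l = 1..d - 1. pistar d l w r) = gap_count d (\<lambda>x. x \<noteq> d) w r"
proof -
  have "(\<Sum>l = 1..d - 1. pistar d l w r) = gap_count d (\<lambda>x. x \<in> {1..d - 1}) w r"
    by (simp add: pistar_eq_gap_count sum_gap_count)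
  also have "\<dots> = gap_count d (\<lambda>x. x \<noteq> d) w r"
    using assms by (intro gap_count_cong) (auto simp: words_def subset_iff)
  finally show ?thesis .
qed

lemma card_word_fibre:
  assumes "1 \<le> d" and w: "w \<in> words m d" and P: "P \<in> abwords (m d) (m (Suc d))"
  shows "card (word_fibre m d w P) =
    (\<Prod>r = 0..m d. (pistar A B P r + (\<Sum>l = 1..d - 1. pistar d l w r)) choose pistar A B P r)"
proof -
  have "count_list w d = count_list P A" "Suc d \<notin> set w"
    using assms by (auto simp: words_def abwords_def)
  then have "card (word_fibre m d w P) = merge_count d w P"
    using w P by (simp add: word_fibre_eq_merges card_merges)
  then show ?thesis
    unfolding sum_pistar_eq_gap_count[OF w]
    using P by (simp add: merge_count_def pistar_eq_gap_count atLeast0AtMost abwords_def)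
qed

lemma tuples_word_fibre:
  assumes "1 \<le> d" and W: "W \<in> word_fibre m d w P"
  shows "tuples (Suc d) W = (\<Sum>r = 0..m d. Scount d w r * pistar A B P r)"
proof -
  have count: "count_list W d = m d" and letters: "set W \<subseteq> {1..Suc d}"
    using W assms(1) by (auto simp: word_fibre_def words_def)
  have "w = filter (\<lambda>x. x \<noteq> Suc d) W"
    and "P = map (\<lambda>x. if x = d then A else B) (filter (\<lambda>x. x = d \<or> x = Suc d) W)"
    using W filter_top_letters[OF letters] by (simp_all add: word_fibre_def)
  then show ?thesis
    using tuples_Suc_eq_sum_Scount[OF assms(1) order_refl] count
    by (simp add: pistar_eq_gap_count atLeast0AtMost)
qed

lemma sum_card_word_fibre:
  assumes "1 \<le> d"
  shows "(\<Sum>w\<in>words m d. \<Sum>P\<in>abwords (m d) (m (Suc d)). card (word_fibre m d w P)) = card (words m (Suc d))"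
proof -
  define proj where "proj W = (filter (\<lambda>x. x \<noteq> Suc d) W,
    map (\<lambda>x. if x = d then A else B) (filter (\<lambda>x. x \<notin> {1..d - 1}) W))" for W
  have "proj ` words m (Suc d) \<subseteq> words m d \<times> abwords (m d) (m (Suc d))"
  proof (rule image_subsetI)
    fix W assume W: "W \<in> words m (Suc d)"
    then have "filter (\<lambda>x. x \<notin> {1..d - 1}) W = filter (\<lambda>x. x = d \<or> x = Suc d) W"
      by (intro filter_top_letters) (simp add: words_def)
    then show "proj W \<in> words m d \<times> abwords (m d) (m (Suc d))"
      using W assms by (auto simp: proj_def words_def abwords_def count_list_filter count_list_ab_projection)
  qed
  then have "(\<Sum>y\<in>words m d \<times> abwords (m d) (m (Suc d)). card {W \<in> words m (Suc d). proj W = y}) =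
      card (words m (Suc d))"
    using sum.group[of "words m (Suc d)" _ proj "\<lambda>_. 1 :: nat"] by (simp add: finite_words finite_abwords)
  moreover have "{W \<in> words m (Suc d). proj W = y} = word_fibre m d (fst y) (snd y)" for y
    by (auto simp: proj_def word_fibre_def)
  ultimately show ?thesis
    by (simp add: sum.cartesian_product split_def)
qed

theorem mainTheorem6:
  fixes k :: nat and m :: "nat \<Rightarrow> nat"
  assumes "k \<ge> 3"
  defines "fibre \<equiv> \<lambda>w P. {W \<in> words m (k - 1).
              filter (\<lambda>x. x \<noteq> k - 1) W = w \<and>
              map (\<lambda>x. if x = k - 2 then A else B) (filter (\<lambda>x. x \<notin> {1..k - 3}) W) = P}"
  shows "(\<forall>w \<in> words m (k - 2). \<forall>P \<in> abwords (m (k - 2)) (m (k - 1)).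
            card (fibre w P) =
              (\<Prod>r = 0..m (k - 2). (pistar A B P r + (\<Sum>l = 1..k - 3. pistar (k - 2) l w r))
                                       choose (pistar A B P r))
          \<and> (\<forall>W \<in> fibre w P.
               tuples (k - 1) W = (\<Sum>r = 0..m (k - 2). Scount (k - 2) w r * pistar A B P r)))
       \<and> (\<Sum>w \<in> words m (k - 2). \<Sum>P \<in> abwords (m (k - 2)) (m (k - 1)). card (fibre w P))
           = multinomial m (k - 1)"
proof -
  define d where "d = k - 2"
  have d: "1 \<le> d" "k - 1 = Suc d" "k - 2 = d" "k - 3 = d - 1"
    using assms(1) by (auto simp: d_def)
  have "fibre = word_fibre m d"
    unfolding fibre_def d by (simp add: word_fibre_def fun_eq_iff)
  moreover have "(\<Sum>w\<in>words m d. \<Sum>P\<in>abwords (m d) (m (Suc d)). card (word_fibre m d w P)) =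
      multinomial m (Suc d)"
    using sum_card_word_fibre[OF d(1)] card_words by simp
  ultimately show ?thesis
    unfolding d(2-4) using card_word_fibre[OF d(1)] tuples_word_fibre[OF d(1)] by blast
qed

end
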